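(* Let $R$ be an associative ring with identity, and let $a,b,c,d\in R$ satisfy $bdb=bac$ and $dbd=acd$. If $ac\in R^{d}$, then $bd\in R^{d}$ and $(bd)^{d}=b\big((ac)^{d}\big)^2d$.
   Context: For $x\in R$, $\mathrm{comm}(x)=\{y\in R : xy=yx\}$ and $\mathrm{comm}^2(x)=\{y\in R : yz=zy \text{ for all } z\in\mathrm{comm}(x)\}$. $R^{inv}$ denotes the units of $R$, and $R^{qnil}=\{x\in R : 1+xy\in R^{inv}\text{ for every } y\in \mathrm{comm}(x)\}$. An element $x\in R$ has a generalized Drazin (g-Drazin) inverse if there is $y\in R$ with $y=yxy$, $y\in\mathrm{comm}^2(x)$ and $x-x^2y\in R^{qnil}$; such $y$ is unique and denoted $x^{d}$. $R^{d}$ is the set of elements having a g-Drazin inverse. *)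

theory Defs
  imports Main
begin

definition comm :: "'a::ring_1 \<Rightarrow> 'a set" where
  "comm x = {y. x * y = y * x}"

definition comm2 :: "'a::ring_1 \<Rightarrow> 'a set" where
  "comm2 x = {y. \<forall>z\<in>comm x. y * z = z * y}"

definition units :: "'a::ring_1 set" where
  "units = {u. \<exists>v. u * v = 1 \<and> v * u = 1}"

definition qnil :: "'a::ring_1 set" where
  "qnil = {x. \<forall>y\<in>comm x. 1 + x * y \<in> units}"

definition is_gdrazin_inv :: "'a::ring_1 \<Rightarrow> 'a \<Rightarrow> bool" where
  "is_gdrazin_inv x y \<longleftrightarrow> y = y * x * y \<and> y \<in> comm2 x \<and> x - x * x * y \<in> qnil"

definition gdrazin_set :: "'a::ring_1 set" where
  "gdrazin_set = {x. \<exists>y. is_gdrazin_inv x y}"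

definition gdrazin :: "'a::ring_1 \<Rightarrow> 'a" where
  "gdrazin x = (THE y. is_gdrazin_inv x y)"

end

theory Submission
  imports Defs
begin

(* Write y for the g-Drazin inverse of ac. The identities bdb = bac and dbd = acd move
   commuting elements across: if t commutes with bd then dtb commutes with ac. This transfers
   the double commutant of ac to bd, and, together with Jacobson's lemma
   (1 - xy invertible iff 1 - yx invertible), also quasinilpotence. The candidate b y^2 d then
   satisfies the defining identities, its residue bd - (bd)^2 b y^2 d being b e d with
   e = 1 - ac y; the quadruple (b, a, ce, ed) again satisfies the two identities and ac e is
   quasinilpotent, so the residue is quasinilpotent as well. *)

lemma unitsI: "u * v = 1 \<Longrightarrow> v * u = 1 \<Longrightarrow> u \<in> units"
  unfolding units_def by blast

lemma units_one_minus_mult_commute: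
  fixes x y :: "'a::ring_1"
  assumes "1 - x * y \<in> units"
  shows "1 - y * x \<in> units"
proof -
  obtain v where v1: "(1 - x * y) * v = 1" and v2: "v * (1 - x * y) = 1"
    using assms unfolding units_def by blast
  have xyv: "x * y * v = v - 1" and vxy: "v * x * y = v - 1"
    using v1 v2 by (simp_all add: algebra_simps)
  have "(1 - y * x) * (1 + y * v * x) = 1 + y * v * x - y * x - y * (x * y * v) * x"
    by (simp add: algebra_simps)
  also have "\<dots> = 1 + y * v * x - y * x - y * (v - 1) * x" by (simp only: xyv)
  also have "\<dots> = 1" by (simp add: algebra_simps)
  finally have right: "(1 - y * x) * (1 + y * v * x) = 1" .
  have "(1 + y * v * x) * (1 - y * x) = 1 + y * v * x - y * x - y * (v * x * y) * x"
    by (simp add: algebra_simps)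
  also have "\<dots> = 1 + y * v * x - y * x - y * (v - 1) * x" by (simp only: vxy)
  also have "\<dots> = 1" by (simp add: algebra_simps)
  finally have left: "(1 + y * v * x) * (1 - y * x) = 1" .
  from right left show ?thesis by (rule unitsI)
qed

lemma units_one_plus_of_one_minus_square:
  fixes x :: "'a::ring_1"
  assumes "1 - x * x \<in> units"
  shows "1 + x \<in> units"
proof -
  obtain v where v1: "(1 - x * x) * v = 1" and v2: "v * (1 - x * x) = 1"
    using assms unfolding units_def by blast
  have right: "(1 + x) * ((1 - x) * v) = 1"
    using v1 by (simp add: algebra_simps)
  have left: "(v * (1 - x)) * (1 + x) = 1"
    using v2 by (simp add: algebra_simps)
  have "v * (1 - x) = (v * (1 - x)) * ((1 + x) * ((1 - x) * v))"
    using right by simp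
  also have "\<dots> = (1 - x) * v"
    using left by (simp add: mult.assoc[symmetric])
  finally have "v * (1 - x) = (1 - x) * v" .
  with right left show ?thesis by (intro unitsI[of _ "(1 - x) * v"]) auto
qed

lemma idempotent_eq_zero_of_one_minus_unit:
  fixes w :: "'a::ring_1"
  assumes "w * w = w" and "1 - w \<in> units"
  shows "w = 0"
proof -
  obtain v where v: "(1 - w) * v = 1"
    using assms(2) unfolding units_def by blast
  have "w = (w * (1 - w)) * v"
    using v by (simp add: mult.assoc)
  also have "\<dots> = 0"
    using assms(1) by (simp add: right_diff_distrib)
  finally show ?thesis .
qed

lemma comm2_mult: "u \<in> comm2 x \<Longrightarrow> v \<in> comm2 x \<Longrightarrow> u * v \<in> comm2 x"
  unfolding comm2_def by (simp add: mult.assoc) (metis mult.assoc)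

lemma is_gdrazin_inv_commute:
  "is_gdrazin_inv x y \<Longrightarrow> w \<in> comm x \<Longrightarrow> y * w = w * y"
  unfolding is_gdrazin_inv_def comm2_def by blast

lemma is_gdrazin_inv_commute_self: "is_gdrazin_inv x y \<Longrightarrow> y * x = x * y"
  by (erule is_gdrazin_inv_commute) (simp add: comm_def)

lemma is_gdrazin_inv_idempotent: "is_gdrazin_inv x y \<Longrightarrow> x * y * (x * y) = x * y"
  unfolding is_gdrazin_inv_def by (metis mult.assoc)

lemma is_gdrazin_inv_commute_inv:
  assumes "is_gdrazin_inv x y" and "is_gdrazin_inv x z"
  shows "y * z = z * y"
proof (rule is_gdrazin_inv_commute[OF assms(1)])
  show "z \<in> comm x"
    using is_gdrazin_inv_commute_self[OF assms(2)] by (simp add: comm_def)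
qed

lemma is_gdrazin_inv_idempotents_commute:
  assumes y: "is_gdrazin_inv x y" and z: "is_gdrazin_inv x z"
  shows "x * y * (x * z) = x * z * (x * y)"
proof -
  have yx: "y * x = x * y" and zx: "z * x = x * z" and yz: "y * z = z * y"
    using y z by (simp_all add: is_gdrazin_inv_commute_self is_gdrazin_inv_commute_inv)
  then show ?thesis
    by (metis mult.assoc)
qed

lemma is_gdrazin_inv_absorb:
  fixes x y z :: "'a::ring_1"
  assumes y: "is_gdrazin_inv x y" and z: "is_gdrazin_inv x z"
  shows "x * z = x * y * (x * z)"
proof -
  have yx: "y * x = x * y" and zx: "z * x = x * z" and yz: "y * z = z * y"
    using y z by (simp_all add: is_gdrazin_inv_commute_self is_gdrazin_inv_commute_inv)
  have xyxz: "x * y * (x * z) = x * x * y * z"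
    by (metis mult.assoc yx)
  define n where "n = x - x * x * y"
  define w where "w = x * z - x * y * (x * z)"
  have "x * x * y * z = z * (x * x * y)"
    by (metis mult.assoc yz zx)
  then have "n * z = z * n"
    unfolding n_def by (simp add: left_diff_distrib right_diff_distrib zx)
  then have "- z \<in> comm n"
    by (simp add: comm_def)
  moreover have "n \<in> qnil"
    using y by (simp add: is_gdrazin_inv_def n_def)
  ultimately have "1 + n * (- z) \<in> units"
    unfolding qnil_def by blast
  moreover have "n * z = w"
    unfolding n_def w_def by (simp add: left_diff_distrib xyxz)
  ultimately have "1 - w \<in> units"
    by simp
  moreover have "w * w = w"
  proof -
    define p q where "p = x * y" and "q = x * z"
    have pp: "p * p = p" and qq: "q * q = q"
      using y z by (simp_all add: p_def q_def is_gdrazin_inv_idempotent)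
    have pq: "p * q = q * p"
      unfolding p_def q_def using y z by (rule is_gdrazin_inv_idempotents_commute)
    have "w = q - p * q"
      by (simp add: w_def p_def q_def)
    moreover have "(q - p * q) * (q - p * q) = q - p * q"
      by (simp add: algebra_simps pp qq)
         (metis pq pp qq mult.assoc)
    ultimately show ?thesis by simp
  qed
  ultimately have "w = 0"
    by (simp add: idempotent_eq_zero_of_one_minus_unit)
  then show ?thesis
    by (simp add: w_def)
qed

lemma is_gdrazin_inv_unique:
  fixes x y z :: "'a::ring_1"
  assumes y: "is_gdrazin_inv x y" and z: "is_gdrazin_inv x z"
  shows "y = z"
proof -
  have xy_xz: "x * y = x * z"
    using is_gdrazin_inv_absorb[OF y z] is_gdrazin_inv_absorb[OF z y]
      is_gdrazin_inv_idempotents_commute[OF y z]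
    by simp
  have yx: "y * x = x * y" and zx: "z * x = x * z"
    using y z by (simp_all add: is_gdrazin_inv_commute_self)
  have "y = y * (x * y)"
    using y by (simp add: is_gdrazin_inv_def mult.assoc)
  also have "\<dots> = (y * x) * z"
    by (simp add: xy_xz mult.assoc)
  also have "\<dots> = (x * z) * z"
    by (simp add: yx xy_xz)
  also have "\<dots> = z * (x * z)"
    by (simp add: zx[symmetric] mult.assoc)
  also have "\<dots> = z"
    using z by (simp add: is_gdrazin_inv_def mult.assoc)
  finally show ?thesis .
qed

lemma gdrazin_eqI: "is_gdrazin_inv x y \<Longrightarrow> gdrazin x = y"
  unfolding gdrazin_def by (rule the_equality) (auto intro: is_gdrazin_inv_unique)

lemma cline_comm_transfer:
  fixes a b c d t :: "'a::ring_1"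
  assumes bdb: "b * d * b = b * a * c" and dbd: "d * b * d = a * c * d"
    and t: "t \<in> comm (b * d)"
  shows "d * t * b \<in> comm (a * c)"
proof -
  have tbd: "b * d * t = t * (b * d)"
    using t by (simp add: comm_def)
  have "a * c * (d * t * b) = (a * c * d) * (t * b)"
    by (simp add: mult.assoc)
  also have "\<dots> = d * (b * d * t) * b"
    by (simp only: dbd[symmetric]) (simp add: mult.assoc)
  also have "\<dots> = d * t * (b * d * b)"
    by (metis tbd mult.assoc)
  also have "\<dots> = d * t * b * (a * c)"
    by (simp only: bdb) (simp add: mult.assoc)
  finally show ?thesis
    by (simp add: comm_def)
qed

lemma cline_qnil:
  fixes a b c d :: "'a::ring_1"
  assumes bdb: "b * d * b = b * a * c" and dbd: "d * b * d = a * c * d"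
    and ac: "a * c \<in> qnil"
  shows "b * d \<in> qnil"
  unfolding qnil_def
proof (intro CollectI ballI)
  fix t
  assume t: "t \<in> comm (b * d)"
  then have tbd: "b * d * t = t * (b * d)"
    by (simp add: comm_def)
  then have "t * t \<in> comm (b * d)"
    by (simp add: comm_def) (metis mult.assoc)
  then have "- (d * (t * t) * b) \<in> comm (a * c)"
    using cline_comm_transfer[OF bdb dbd] by (simp add: comm_def)
  then have "1 + a * c * - (d * (t * t) * b) \<in> units"
    using ac unfolding qnil_def by blast
  \<comment> \<open>\<open>a c d t\<^sup>2 b = (d t b d t) b\<close> while \<open>(b d t)\<^sup>2 = b (d t b d t)\<close>: Jacobson's lemma links the two.\<close>
  moreover have "a * c * (d * (t * t) * b) = (d * t * b * d * t) * b"
  proof -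
    have "a * c * (d * (t * t) * b) = (a * c * d) * t * t * b"
      by (simp add: mult.assoc)
    also have "\<dots> = d * (b * d * t) * t * b"
      by (simp only: dbd[symmetric]) (simp add: mult.assoc)
    also have "\<dots> = (d * t * b * d * t) * b"
      by (metis tbd mult.assoc)
    finally show ?thesis .
  qed
  ultimately have "1 - (d * t * b * d * t) * b \<in> units"
    by simp
  then have "1 - b * (d * t * b * d * t) \<in> units"
    by (rule units_one_minus_mult_commute)
  then have "1 - (b * d * t) * (b * d * t) \<in> units"
    by (simp add: mult.assoc)
  then show "1 + b * d * t \<in> units"
    by (rule units_one_plus_of_one_minus_square)
qed

lemma cline_comm2_transfer:
  fixes a b c d u :: "'a::ring_1"
  assumes bdb: "b * d * b = b * a * c" and dbd: "d * b * d = a * c * d"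
    and u: "u \<in> comm2 (a * c)"
  shows "b * (u * (a * c)) * d \<in> comm2 (b * d)"
  unfolding comm2_def
proof (intro CollectI ballI)
  fix t
  assume t: "t \<in> comm (b * d)"
  then have tbd: "b * d * t = t * (b * d)"
    by (simp add: comm_def)
  have u_dtb: "u * (d * t * b) = d * t * b * u"
    using u cline_comm_transfer[OF bdb dbd t] by (simp add: comm2_def)
  have u_ac: "u * (a * c) = a * c * u"
    using u by (simp add: comm2_def comm_def)
  have "b * (u * (a * c)) * d * t = b * u * (a * c * d) * t"
    by (simp add: mult.assoc)
  also have "\<dots> = b * (u * (d * t * b)) * d"
    by (simp only: dbd[symmetric]) (metis tbd mult.assoc)
  also have "\<dots> = b * d * t * b * u * d"
    by (metis u_dtb mult.assoc)
  also have "\<dots> = t * (b * d * b) * u * d"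
    by (metis tbd mult.assoc)
  also have "\<dots> = t * (b * (u * (a * c)) * d)"
    by (simp only: bdb) (simp add: u_ac mult.assoc)
  finally show "b * (u * (a * c)) * d * t = t * (b * (u * (a * c)) * d)" .
qed

locale cline_gdrazin =
  fixes a b c d y :: "'a::ring_1"
  assumes bdb: "b * d * b = b * a * c" and dbd: "d * b * d = a * c * d"
    and gdrazin_ac: "is_gdrazin_inv (a * c) y"
begin

lemma ac_comm_db: "a * c * (d * b) = d * b * (a * c)"
  using cline_comm_transfer[OF bdb dbd, of 1] by (simp add: comm_def)

lemma y_comm_ac: "y * (a * c) = a * c * y"
  using gdrazin_ac by (rule is_gdrazin_inv_commute_self)

lemma y_comm_db: "y * (d * b) = d * b * y"
  using is_gdrazin_inv_commute[OF gdrazin_ac] ac_comm_db by (simp add: comm_def)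

lemma ac_yy: "a * c * (y * y) = y"
  using gdrazin_ac y_comm_ac unfolding is_gdrazin_inv_def by (metis mult.assoc)

lemma b_db_db: "b * (d * b * (d * b)) = b * (a * c * (a * c))"
proof -
  have b_db: "b * (d * b) = b * (a * c)"
    using bdb by (simp add: mult.assoc)
  have "b * (d * b * (d * b)) = b * (a * c) * (d * b)"
    by (metis b_db mult.assoc)
  also have "\<dots> = b * (d * b) * (a * c)"
    by (metis ac_comm_db mult.assoc)
  finally show ?thesis
    by (simp add: b_db mult.assoc)
qed

lemma bd_inner_inverse: "b * (y * y) * d * (b * d) * (b * (y * y) * d) = b * (y * y) * d"
proof -
  have yy_gg: "y * y * (d * b * (d * b)) = d * b * (d * b) * (y * y)"
    by (metis y_comm_db mult.assoc)
  have "b * (y * y) * d * (b * d) * (b * (y * y) * d)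
      = b * (y * y * (d * b * (d * b))) * (y * y) * d"
    by (simp add: mult.assoc)
  also have "\<dots> = b * (d * b * (d * b)) * (y * y * (y * y)) * d"
    by (simp only: yy_gg) (simp add: mult.assoc)
  also have "\<dots> = b * (a * c * (a * c)) * (y * y * (y * y)) * d"
    by (simp only: b_db_db)
  also have "\<dots> = b * (a * c * (y * y) * (a * c * (y * y))) * d"
    by (metis y_comm_ac mult.assoc)
  also have "\<dots> = b * (y * y) * d"
    by (simp only: ac_yy)
  finally show ?thesis .
qed

lemma comm2_bd: "b * (y * y) * d \<in> comm2 (b * d)"
proof -
  have "y \<in> comm2 (a * c)"
    using gdrazin_ac by (simp add: is_gdrazin_inv_def)
  then have "b * (y * y * y * (a * c)) * d \<in> comm2 (b * d)"
    by (intro cline_comm2_transfer[OF bdb dbd] comm2_mult)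
  moreover have "y * y * y * (a * c) = y * y"
    using gdrazin_ac y_comm_ac unfolding is_gdrazin_inv_def by (metis mult.assoc)
  ultimately show ?thesis
    by simp
qed

lemma bd_residue_qnil: "b * d - b * d * (b * d) * (b * (y * y) * d) \<in> qnil"
proof -
  define e where "e = 1 - a * c * y"
  have e_db: "e * (d * b) = d * b * e"
    unfolding e_def by (simp add: algebra_simps) (metis ac_comm_db y_comm_db mult.assoc)
  have e_ac: "e * (a * c) = a * c * e"
    unfolding e_def by (simp add: algebra_simps) (metis y_comm_ac mult.assoc)
  have ee: "e * e = e"
    using is_gdrazin_inv_idempotent[OF gdrazin_ac] unfolding e_def by (simp add: algebra_simps)
  have "b * d * (b * d) * (b * (y * y) * d) = b * (d * b * (d * b)) * (y * y) * d"
    by (simp add: mult.assoc)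
  also have "\<dots> = b * (a * c * (a * c * (y * y))) * d"
    by (simp only: b_db_db) (simp add: mult.assoc)
  also have "\<dots> = b * (a * c * y) * d"
    by (simp only: ac_yy)
  finally have residue: "b * d - b * d * (b * d) * (b * (y * y) * d) = b * (e * d)"
    by (simp add: e_def algebra_simps)
  have "b * (e * d) * b = b * (d * b) * e"
    by (metis e_db mult.assoc)
  also have "\<dots> = b * a * (c * e)"
    using bdb by (simp add: mult.assoc)
  finally have bdb': "b * (e * d) * b = b * a * (c * e)" .
  have "e * d * b * (e * d) = e * e * (d * b * d)"
    by (metis e_db mult.assoc)
  also have "\<dots> = a * (c * e) * (e * d)"
    by (simp add: ee dbd mult.assoc[symmetric]) (metis e_ac ee mult.assoc)
  finally have dbd': "e * d * b * (e * d) = a * (c * e) * (e * d)" .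
  have "a * (c * e) = a * c - a * c * (a * c) * y"
    by (simp add: e_def algebra_simps)
  then have "a * (c * e) \<in> qnil"
    using gdrazin_ac by (simp add: is_gdrazin_inv_def)
  with bdb' dbd' have "b * (e * d) \<in> qnil"
    by (rule cline_qnil)
  with residue show ?thesis
    by simp
qed

lemma gdrazin_inv_bd: "is_gdrazin_inv (b * d) (b * y\<^sup>2 * d)"
  using bd_inner_inverse comm2_bd bd_residue_qnil
  by (simp add: is_gdrazin_inv_def power2_eq_square)

end

theorem theorem2p2:
  fixes a b c d :: "'a::ring_1"
  assumes "b * d * b = b * a * c" and "d * b * d = a * c * d"
    and "a * c \<in> gdrazin_set"
  shows "b * d \<in> gdrazin_set \<and> gdrazin (b * d) = b * (gdrazin (a * c))^2 * d"
proof -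
  obtain y where y: "is_gdrazin_inv (a * c) y"
    using assms(3) unfolding gdrazin_set_def by blast
  interpret cline_gdrazin a b c d y
    using assms(1,2) y by unfold_locales
  show ?thesis
    using gdrazin_inv_bd gdrazin_eqI[OF gdrazin_inv_bd] gdrazin_eqI[OF y]
    unfolding gdrazin_set_def by auto
qed

end
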